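(* Let $L_x, L_y > 0$ and $\mathcal{D} = (0,L_x)\times(0,L_y)$. For non-negative integers $m,n$ with $(m,n)\neq(0,0)$ let $\Phi_{mn}(x,y) = \cos(m\pi x/L_x)\cos(n\pi y/L_y)$ (up to a positive normalisation constant), with wavenumber $k_{mn} = \sqrt{(m\pi/L_x)^2 + (n\pi/L_y)^2}$, so that $-\Delta\Phi_{mn} = k_{mn}^2\Phi_{mn}$ in $\mathcal{D}$ and $\bm{n}\cdot\nabla\Phi_{mn} = 0$ on $\partial\mathcal{D}$. For $h>0$ let $\omega_{mn}(h) = \sqrt{k_{mn}\tanh(k_{mn} h)}$. Then there do not exist three such modes $\Psi_j = \Phi_{m_j n_j}$ ($j=1,2,3$), with wavenumbers $K_j = k_{m_j n_j}$ and frequencies $\Omega_j = \omega_{m_j n_j}$, together with a depth $h_c \in (0,\infty)$, such that both $\iint_{\mathcal{D}} \Psi_1\Psi_2\Psi_3\,\mathrm{d}A \neq 0$ and $\Omega_1(h_c) + \Omega_2(h_c) = \Omega_3(h_c)$. That is, resonant triads cannot exist in a rectangular cylinder of finite depth.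
   Context: A resonant triad in a cylinder with cross-section $\mathcal{D}$ and dimensionless fluid depth $h$ consists of three Neumann Laplacian eigenmodes $\Psi_1,\Psi_2,\Psi_3$ on $\mathcal{D}$ with positive wavenumbers $K_j$ (i.e. $-\Delta\Psi_j = K_j^2\Psi_j$) such that the correlation condition $\iint_{\mathcal{D}}\Psi_1\Psi_2\Psi_3\,\mathrm{d}A\neq 0$ holds and, at some critical depth $h_c\in(0,\infty)$, the angular frequencies $\Omega_j = \sqrt{K_j\tanh(K_j h_c)}$ satisfy $\Omega_1+\Omega_2=\Omega_3$ (other sign combinations reduce to this one by relabelling). *)

theory Defs
  imports "HOL-Analysis.Analysis"
begin

definition Phi :: "real \<Rightarrow> real \<Rightarrow> nat \<Rightarrow> nat \<Rightarrow> real \<times> real \<Rightarrow> real" where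
  "Phi Lx Ly m n p = cos (real m * pi * fst p / Lx) * cos (real n * pi * snd p / Ly)"

definition wavenum :: "real \<Rightarrow> real \<Rightarrow> nat \<Rightarrow> nat \<Rightarrow> real" where
  "wavenum Lx Ly m n = sqrt ((real m * pi / Lx)\<^sup>2 + (real n * pi / Ly)\<^sup>2)"

definition omega :: "real \<Rightarrow> real \<Rightarrow> nat \<Rightarrow> nat \<Rightarrow> real \<Rightarrow> real" where
  "omega Lx Ly m n h = sqrt (wavenum Lx Ly m n * tanh (wavenum Lx Ly m n * h))"

end

theory Submission imports Defs begin

(* The correlation integral factorises into a product of one-dimensional integrals of
   triple cosine products, and such an integral vanishes unless m3 <= m1 + m2; likewise
   for the n's.  Hence every correlated triad satisfies the triangle inequality
   K3 <= K1 + K2.  On the other hand the dispersion relation w(k) = sqrt (k tanh (k h))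
   is increasing and, since tanh t / t is strictly decreasing, strictly subadditive, so
   Omega3 <= w(K1 + K2) < Omega1 + Omega2 and the resonance condition fails. *)

lemma tanh_gt_mult_one_minus_tanh_sq:
  fixes x :: real
  assumes "x > 0"
  shows "(1 - tanh x ^ 2) * x < tanh x"
proof -
  define g where "g t = tanh t - (1 - tanh t ^ 2) * t" for t :: real
  have deriv_g: "DERIV g t :> 2 * tanh t * (1 - tanh t ^ 2) * t" for t
    unfolding g_def by (auto intro!: derivative_eq_intros simp: algebra_simps power2_eq_square)
  obtain z where z: "0 < z" "z < x" "g x - g 0 = (x - 0) * (2 * tanh z * (1 - tanh z ^ 2) * z)"
    using MVT2[OF assms, of g "\<lambda>t. 2 * tanh t * (1 - tanh t ^ 2) * t"] deriv_g by blast
  have "tanh z ^ 2 < 1"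
    using tanh_real_bounds[of z] by (simp add: abs_square_less_1 abs_less_iff)
  with z have "g x > 0"
    using assms by (simp add: g_def)
  then show ?thesis
    by (simp add: g_def)
qed

lemma tanh_div_strict_antimono:
  fixes x y :: real
  assumes "0 < x" "x < y"
  shows "tanh y / y < tanh x / x"
proof -
  have "\<exists>d. DERIV (\<lambda>t. tanh t / t) t :> d \<and> d < 0" if "x \<le> t" "t \<le> y" for t
  proof -
    have t: "t > 0"
      using that assms by simp
    have "DERIV (\<lambda>t. tanh t / t) t :> ((1 - tanh t ^ 2) * t - tanh t) / t\<^sup>2"
      using t by (auto intro!: derivative_eq_intros simp: field_simps power2_eq_square)
    moreover have "((1 - tanh t ^ 2) * t - tanh t) / t\<^sup>2 < 0"
      using tanh_gt_mult_one_minus_tanh_sq[OF t] t by (simp add: divide_neg_pos)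
    ultimately show ?thesis
      by blast
  qed
  from DERIV_neg_imp_decreasing[OF assms(2) this] show ?thesis
    by simp
qed

definition dispersion :: "real \<Rightarrow> real \<Rightarrow> real" where
  "dispersion h k = sqrt (k * tanh (k * h))"

lemma omega_eq_dispersion: "omega Lx Ly m n h = dispersion h (wavenum Lx Ly m n)"
  unfolding omega_def dispersion_def by (simp add: mult.commute)

lemma dispersion_mono:
  assumes "h > 0" "0 \<le> a" "a \<le> b"
  shows "dispersion h a \<le> dispersion h b"
proof -
  have "tanh (a * h) \<le> tanh (b * h)" "0 \<le> tanh (a * h)"
    using assms by (simp_all add: mult_right_mono)
  then have "a * tanh (a * h) \<le> b * tanh (b * h)"
    using assms by (simp add: mult_mono)
  then show ?thesis
    unfolding dispersion_def by simp
qed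

lemma dispersion_eq_mult_sqrt_tanh_ratio:
  assumes "h > 0" "k > 0"
  shows "dispersion h k = k * sqrt h * sqrt (tanh (k * h) / (k * h))"
proof -
  have "k * tanh (k * h) = k\<^sup>2 * h * (tanh (k * h) / (k * h))"
    using assms by (simp add: field_simps power2_eq_square)
  then have "dispersion h k = sqrt (k\<^sup>2) * sqrt h * sqrt (tanh (k * h) / (k * h))"
    unfolding dispersion_def by (metis real_sqrt_mult)
  then show ?thesis
    using assms by simp
qed

lemma dispersion_strict_subadditive:
  assumes "h > 0" "a > 0" "b > 0"
  shows "dispersion h (a + b) < dispersion h a + dispersion h b"
proof -
  let ?r = "\<lambda>t. sqrt (tanh t / t)"
  have ra: "?r ((a + b) * h) < ?r (a * h)" and rb: "?r ((a + b) * h) < ?r (b * h)"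
    using tanh_div_strict_antimono[of "a * h" "(a + b) * h"]
      tanh_div_strict_antimono[of "b * h" "(a + b) * h"] assms
    by (simp_all add: distrib_right)
  have "dispersion h (a + b) = a * sqrt h * ?r ((a + b) * h) + b * sqrt h * ?r ((a + b) * h)"
    using dispersion_eq_mult_sqrt_tanh_ratio[of h "a + b"] assms by (simp add: algebra_simps)
  also have "\<dots> < a * sqrt h * ?r (a * h) + b * sqrt h * ?r (b * h)"
    using ra rb assms by (intro add_strict_mono mult_strict_left_mono) auto
  also have "\<dots> = dispersion h a + dispersion h b"
    using dispersion_eq_mult_sqrt_tanh_ratio[of h a] dispersion_eq_mult_sqrt_tanh_ratio[of h b] assms
    by simp
  finally show ?thesis .
qed

lemma has_integral_cos_int_multiple:
  fixes L :: real and k :: int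
  assumes "L > 0" "k \<noteq> 0"
  shows "((\<lambda>x. cos (of_int k * pi * x / L)) has_integral 0) {0..L}"
proof -
  define F where "F x = sin (of_int k * pi * x / L) * L / (of_int k * pi)" for x
  have "(F has_vector_derivative cos (of_int k * pi * x / L)) (at x within {0..L})" for x
  proof -
    have "(F has_real_derivative cos (of_int k * pi * x / L)) (at x)"
      unfolding F_def using assms by (auto intro!: derivative_eq_intros simp: field_simps)
    then show ?thesis
      by (simp add: has_real_derivative_iff_has_vector_derivative has_vector_derivative_at_within)
  qed
  with fundamental_theorem_of_calculus[of 0 L F] assms
  have "((\<lambda>x. cos (of_int k * pi * x / L)) has_integral (F L - F 0)) {0..L}"
    by simp
  moreover have "F L - F 0 = 0"
    unfolding F_def using assms by (simp add: mult.commute[of _ pi])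
  ultimately show ?thesis
    by simp
qed

lemma cos_triple_product:
  "cos (A::real) * cos B * cos C = (cos (A + B - C) + cos (A - B + C) + cos (- A + B + C) + cos (A + B + C)) / 4"
  by (simp add: cos_add cos_diff sin_add sin_diff algebra_simps)

definition cos_triple :: "real \<Rightarrow> nat \<Rightarrow> nat \<Rightarrow> nat \<Rightarrow> real \<Rightarrow> real" where
  "cos_triple L m1 m2 m3 x = cos (real m1 * pi * x / L) * cos (real m2 * pi * x / L) * cos (real m3 * pi * x / L)"

lemma integral_cos_triple_eq_0:
  assumes "L > 0" "m3 > m1 + m2"
  shows "integral {0..L} (cos_triple L m1 m2 m3) = 0"
proof -
  define k1 where "k1 = int m1 + int m2 - int m3"
  define k2 where "k2 = int m1 - int m2 + int m3"
  define k3 where "k3 = - int m1 + int m2 + int m3"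
  define k4 where "k4 = int m1 + int m2 + int m3"
  have nonzero: "k1 \<noteq> 0" "k2 \<noteq> 0" "k3 \<noteq> 0" "k4 \<noteq> 0"
    using assms(2) unfolding k1_def k2_def k3_def k4_def by auto
  let ?c = "\<lambda>k x. cos (of_int k * pi * x / L)"
  have expand: "cos_triple L m1 m2 m3 = (\<lambda>x. (?c k1 x + ?c k2 x + ?c k3 x + ?c k4 x) / 4)"
    unfolding cos_triple_def cos_triple_product k1_def k2_def k3_def k4_def
    by (simp add: fun_eq_iff algebra_simps add_divide_distrib diff_divide_distrib)
  have "((\<lambda>x. (?c k1 x + ?c k2 x + ?c k3 x + ?c k4 x) / 4) has_integral (0 + 0 + 0 + 0) / 4) {0..L}"
    by (intro has_integral_divide has_integral_add has_integral_cos_int_multiple assms nonzero)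
  from integral_unique[OF this] show ?thesis
    unfolding expand by simp
qed

lemma integral_cos_triple_nonzero_imp_le:
  assumes "L > 0" "integral {0..L} (cos_triple L m1 m2 m3) \<noteq> 0"
  shows "m3 \<le> m1 + m2"
  using integral_cos_triple_eq_0[OF assms(1), of m1 m2 m3] assms(2) by linarith

lemma integral_box_separable:
  fixes f g :: "real \<Rightarrow> real"
  assumes "continuous_on {a..b} f" "continuous_on {c..d} g"
  shows "integral (box (a, c) (b, d)) (\<lambda>p. f (fst p) * g (snd p))
    = integral {a..b} f * integral {c..d} g"
proof -
  have "continuous_on (cbox (a, c) (b, d)) (\<lambda>p. f (fst p) * g (snd p))"
    by (intro continuous_intros continuous_on_compose2[OF assms(1)] continuous_on_compose2[OF assms(2)])
      (auto simp: cbox_Pair_eq)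
  then have "integral (cbox (a, c) (b, d)) (\<lambda>p. f (fst p) * g (snd p))
      = integral {a..b} (\<lambda>x. integral {c..d} (\<lambda>y. f x * g y))"
    using integral_prod_continuous by fastforce
  then show ?thesis
    by (simp add: integral_open_interval)
qed

lemma integral_Phi_triple:
  assumes "Lx > 0" "Ly > 0"
  shows "integral (box (0, 0) (Lx, Ly)) (\<lambda>p. Phi Lx Ly m1 n1 p * Phi Lx Ly m2 n2 p * Phi Lx Ly m3 n3 p)
    = integral {0..Lx} (cos_triple Lx m1 m2 m3) * integral {0..Ly} (cos_triple Ly n1 n2 n3)"
proof -
  have "(\<lambda>p. Phi Lx Ly m1 n1 p * Phi Lx Ly m2 n2 p * Phi Lx Ly m3 n3 p)
      = (\<lambda>p. cos_triple Lx m1 m2 m3 (fst p) * cos_triple Ly n1 n2 n3 (snd p))"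
    unfolding Phi_def cos_triple_def by (simp add: fun_eq_iff mult_ac)
  moreover have "continuous_on S (cos_triple L k1 k2 k3)" if "L > 0" for S L k1 k2 k3
    unfolding cos_triple_def using that by (intro continuous_intros) auto
  ultimately show ?thesis
    using assms by (simp add: integral_box_separable)
qed

lemma wavenum_pos:
  assumes "Lx > 0" "Ly > 0" "(m, n) \<noteq> (0, 0)"
  shows "wavenum Lx Ly m n > 0"
proof -
  have "(real m * pi / Lx)\<^sup>2 > 0 \<or> (real n * pi / Ly)\<^sup>2 > 0"
    using assms by auto
  then show ?thesis
    unfolding wavenum_def by (metis add_pos_nonneg add_nonneg_pos zero_le_power2 real_sqrt_gt_zero)
qed

lemma wavenum_triangle:
  assumes "Lx > 0" "Ly > 0" "m3 \<le> m1 + m2" "n3 \<le> n1 + n2"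
  shows "wavenum Lx Ly m3 n3 \<le> wavenum Lx Ly m1 n1 + wavenum Lx Ly m2 n2"
proof -
  let ?p = "\<lambda>m. real m * pi / Lx" and ?q = "\<lambda>n. real n * pi / Ly"
  have "?p m3 \<le> ?p m1 + ?p m2" "?q n3 \<le> ?q n1 + ?q n2"
    using assms by (simp_all add: divide_right_mono mult_right_mono flip: add_divide_distrib distrib_right)
  then have "(?p m3)\<^sup>2 + (?q n3)\<^sup>2 \<le> (?p m1 + ?p m2)\<^sup>2 + (?q n1 + ?q n2)\<^sup>2"
    using assms by (intro add_mono power_mono) auto
  then have "wavenum Lx Ly m3 n3 \<le> sqrt ((?p m1 + ?p m2)\<^sup>2 + (?q n1 + ?q n2)\<^sup>2)"
    unfolding wavenum_def by simp
  also have "\<dots> \<le> wavenum Lx Ly m1 n1 + wavenum Lx Ly m2 n2"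
    unfolding wavenum_def by (rule real_sqrt_sum_squares_triangle_ineq)
  finally show ?thesis .
qed

theorem mainTheorem3:
  fixes Lx Ly :: real
  assumes "Lx > 0" and "Ly > 0"
  shows "\<not> (\<exists>m1 n1 m2 n2 m3 n3 :: nat. \<exists>hc :: real.
            (m1, n1) \<noteq> (0, 0) \<and> (m2, n2) \<noteq> (0, 0) \<and> (m3, n3) \<noteq> (0, 0) \<and>
            hc > 0 \<and>
            integral (box (0, 0) (Lx, Ly))
              (\<lambda>p. Phi Lx Ly m1 n1 p * Phi Lx Ly m2 n2 p * Phi Lx Ly m3 n3 p) \<noteq> 0 \<and>
            omega Lx Ly m1 n1 hc + omega Lx Ly m2 n2 hc = omega Lx Ly m3 n3 hc)"
proof
  assume "\<exists>m1 n1 m2 n2 m3 n3 :: nat. \<exists>hc :: real.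
            (m1, n1) \<noteq> (0, 0) \<and> (m2, n2) \<noteq> (0, 0) \<and> (m3, n3) \<noteq> (0, 0) \<and>
            hc > 0 \<and>
            integral (box (0, 0) (Lx, Ly))
              (\<lambda>p. Phi Lx Ly m1 n1 p * Phi Lx Ly m2 n2 p * Phi Lx Ly m3 n3 p) \<noteq> 0 \<and>
            omega Lx Ly m1 n1 hc + omega Lx Ly m2 n2 hc = omega Lx Ly m3 n3 hc"
  then obtain m1 n1 m2 n2 m3 n3 :: nat and hc :: real where
    nonzero: "(m1, n1) \<noteq> (0, 0)" "(m2, n2) \<noteq> (0, 0)" and hc: "hc > 0" and
    correlated: "integral {0..Lx} (cos_triple Lx m1 m2 m3) * integral {0..Ly} (cos_triple Ly n1 n2 n3) \<noteq> 0" and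
    resonant: "omega Lx Ly m1 n1 hc + omega Lx Ly m2 n2 hc = omega Lx Ly m3 n3 hc"
    using integral_Phi_triple[OF assms] by metis
  let ?K = "wavenum Lx Ly"
  have "m3 \<le> m1 + m2" "n3 \<le> n1 + n2"
    using correlated integral_cos_triple_nonzero_imp_le assms by auto
  then have "?K m3 n3 \<le> ?K m1 n1 + ?K m2 n2"
    using wavenum_triangle[OF assms] by blast
  then have "omega Lx Ly m3 n3 hc \<le> dispersion hc (?K m1 n1 + ?K m2 n2)"
    unfolding omega_eq_dispersion
    using dispersion_mono[OF hc] by (simp add: wavenum_def)
  also have "\<dots> < omega Lx Ly m1 n1 hc + omega Lx Ly m2 n2 hc"
    unfolding omega_eq_dispersion
    using dispersion_strict_subadditive[OF hc] wavenum_pos[OF assms] nonzero by blast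
  finally show False
    using resonant by simp
qed

end
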